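(* Let $P,Q,R$ be unary predicate symbols and $S$ a $0$-ary predicate symbol, and let $$\Gamma = \forall x\, \exists y\, (Py \wedge (Qy \rightarrow Rx)) \wedge \neg \forall x\, Rx, \qquad \Delta = \forall x\, (Px \rightarrow (Qx \vee S)) \rightarrow S.$$ Then the implication $\Gamma\rightarrow\Delta$ is valid in all G-models; that is, for every G-model $\mathcal M$ and every state $v$ of $\mathcal M$, if $v\Vdash\Gamma$ then $v\Vdash\Delta$.
   Context: $\neg A$ abbreviates $A\rightarrow\perp$. A G-model is $\mathcal{M}=\langle W,\le,v_0,D,\phi\rangle$: $W$ a nonempty set of states, $\le$ a reflexive transitive relation on $W$, $v_0\in W$ with $v_0\le v$ for all $v\in W$, $D$ a nonempty domain, and for each $k$-ary predicate symbol $P$ a set $\phi(P)\subseteq W\times D^k$ that is monotone: if $v\le w$ and $\langle v,a_1,\dots,a_k\rangle\in\phi(P)$ then $\langle w,a_1,\dots,a_k\rangle\in\phi(P)$. Forcing between states and sentences with constants $\mathbf a$ for elements $a\in D$: $v\Vdash P\mathbf a_1\dots\mathbf a_k$ iff $\langle v,a_1,\dots,a_k\rangle\in\phi(P)$; $\wedge,\vee$ are evaluated pointwise; $v\Vdash A\rightarrow B$ iff for all $w\ge v$, $w\Vdash A$ implies $w\Vdash B$; $\perp$ is never forced; $v\Vdash\exists x A$ iff $v\Vdash A[\mathbf a/x]$ for some $a\in D$; $v\Vdash\forall xA$ iff $v\Vdash A[\mathbf a/x]$ for all $a\in D$. *)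

theory Defs
  imports Main
begin

datatype 'd trm = Var nat | Cst 'd

datatype 'd fm =
    Pr string "'d trm list"
  | Bot
  | And "'d fm" "'d fm"
  | Or "'d fm" "'d fm"
  | Imp "'d fm" "'d fm"
  | Ex nat "'d fm"
  | All nat "'d fm"

definition Neg :: "'d fm \<Rightarrow> 'd fm" where
  "Neg A = Imp A Bot"

definition G_model ::
  "'w set \<Rightarrow> ('w \<Rightarrow> 'w \<Rightarrow> bool) \<Rightarrow> 'w \<Rightarrow> 'd set \<Rightarrow> (string \<Rightarrow> ('w \<times> 'd list) set) \<Rightarrow> bool" where
  "G_model W le v0 D phi \<longleftrightarrow>
     W \<noteq> {} \<and>
     (\<forall>v\<in>W. le v v) \<and>
     (\<forall>u\<in>W. \<forall>v\<in>W. \<forall>w\<in>W. le u v \<longrightarrow> le v w \<longrightarrow> le u w) \<and>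
     v0 \<in> W \<and> (\<forall>v\<in>W. le v0 v) \<and>
     D \<noteq> {} \<and>
     (\<forall>P. phi P \<subseteq> W \<times> lists D) \<and>
     (\<forall>P v w as. v \<in> W \<longrightarrow> w \<in> W \<longrightarrow> le v w \<longrightarrow> (v, as) \<in> phi P \<longrightarrow> (w, as) \<in> phi P)"

fun eval_trm :: "(nat \<Rightarrow> 'd) \<Rightarrow> 'd trm \<Rightarrow> 'd" where
  "eval_trm e (Var x) = e x"
| "eval_trm e (Cst a) = a"

text \<open>Forcing. Instead of substituting constants for bound variables we use an
  assignment e; for sentences this coincides with the substitution-based clauses.\<close>

fun forces ::
  "'w set \<Rightarrow> ('w \<Rightarrow> 'w \<Rightarrow> bool) \<Rightarrow> 'd set \<Rightarrow> (string \<Rightarrow> ('w \<times> 'd list) set)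
   \<Rightarrow> 'w \<Rightarrow> (nat \<Rightarrow> 'd) \<Rightarrow> 'd fm \<Rightarrow> bool" where
  "forces W le D phi v e (Pr P ts) = ((v, map (eval_trm e) ts) \<in> phi P)"
| "forces W le D phi v e Bot = False"
| "forces W le D phi v e (And A B) = (forces W le D phi v e A \<and> forces W le D phi v e B)"
| "forces W le D phi v e (Or A B) = (forces W le D phi v e A \<or> forces W le D phi v e B)"
| "forces W le D phi v e (Imp A B) =
     (\<forall>w\<in>W. le v w \<longrightarrow> forces W le D phi w e A \<longrightarrow> forces W le D phi w e B)"
| "forces W le D phi v e (Ex x A) = (\<exists>a\<in>D. forces W le D phi v (e(x := a)) A)"
| "forces W le D phi v e (All x A) = (\<forall>a\<in>D. forces W le D phi v (e(x := a)) A)"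

text \<open>The concrete formulas. Variables: x = 0, y = 1. P, Q, R unary, S 0-ary.\<close>

definition Gamma :: "'d fm" where
  "Gamma = And
     (All 0 (Ex 1 (And (Pr ''P'' [Var 1]) (Imp (Pr ''Q'' [Var 1]) (Pr ''R'' [Var 0])))))
     (Neg (All 0 (Pr ''R'' [Var 0])))"

definition Delta :: "'d fm" where
  "Delta = Imp (All 0 (Imp (Pr ''P'' [Var 0]) (Or (Pr ''Q'' [Var 0]) (Pr ''S'' []))))
               (Pr ''S'' [])"

end

theory Submission
  imports Defs
begin

text \<open>Suppose a state u above a state forcing \<open>\<Gamma>\<close> forces \<open>\<forall>x (Px \<rightarrow> Qx \<or> S)\<close> but not S.
  For any a, \<open>\<Gamma>\<close> provides b with Pb, which persists up to u; there Qb \<or> S holds, hence Qb,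
  and so Ra. Thus u forces \<open>\<forall>x Rx\<close>, contradicting \<open>\<not>\<forall>x Rx\<close>. Hence S is forced at u.
  The argument uses only reflexivity and persistence, and the classical case split on S at u.\<close>

lemma G_model_refl: "G_model W le v0 D phi \<Longrightarrow> w \<in> W \<Longrightarrow> le w w"
  by (simp add: G_model_def)

lemma G_model_persistent:
  "G_model W le v0 D phi \<Longrightarrow> v \<in> W \<Longrightarrow> w \<in> W \<Longrightarrow> le v w \<Longrightarrow> (v, as) \<in> phi P
    \<Longrightarrow> (w, as) \<in> phi P"
  unfolding G_model_def by blast

lemma forces_Gamma_iff:
  "forces W le D phi w e Gamma \<longleftrightarrow>
     (\<forall>a\<in>D. \<exists>b\<in>D. (w, [b]) \<in> phi ''P'' \<and>
        (\<forall>w'\<in>W. le w w' \<longrightarrow> (w', [b]) \<in> phi ''Q'' \<longrightarrow> (w', [a]) \<in> phi ''R'')) \<and>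
     (\<forall>w'\<in>W. le w w' \<longrightarrow> \<not> (\<forall>a\<in>D. (w', [a]) \<in> phi ''R''))"
  by (simp add: Gamma_def Neg_def)

lemma forces_Delta_iff:
  "forces W le D phi w e Delta \<longleftrightarrow>
     (\<forall>u\<in>W. le w u \<longrightarrow>
        (\<forall>a\<in>D. \<forall>u'\<in>W. le u u' \<longrightarrow> (u', [a]) \<in> phi ''P'' \<longrightarrow>
           (u', [a]) \<in> phi ''Q'' \<or> (u', []) \<in> phi ''S'') \<longrightarrow>
        (u, []) \<in> phi ''S'')"
  by (simp add: Delta_def)

lemma Gamma_forces_S:
  assumes model: "G_model W le v0 D phi"
    and w: "w \<in> W" and u: "u \<in> W" "le w u"
    and Gamma: "forces W le D phi w e Gamma"
    and hyp: "\<forall>a\<in>D. \<forall>u'\<in>W. le u u' \<longrightarrow> (u', [a]) \<in> phi ''P'' \<longrightarrow>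
                (u', [a]) \<in> phi ''Q'' \<or> (u', []) \<in> phi ''S''"
  shows "(u, []) \<in> phi ''S''"
proof (rule ccontr)
  assume no_S: "(u, []) \<notin> phi ''S''"
  have "(u, [a]) \<in> phi ''R''" if a: "a \<in> D" for a
  proof -
    from Gamma a obtain b where b: "b \<in> D" "(w, [b]) \<in> phi ''P''"
      and Q_imp_R: "\<forall>w'\<in>W. le w w' \<longrightarrow> (w', [b]) \<in> phi ''Q'' \<longrightarrow> (w', [a]) \<in> phi ''R''"
      unfolding forces_Gamma_iff by blast
    have "(u, [b]) \<in> phi ''P''"
      using G_model_persistent[OF model w u b(2)] .
    with hyp b(1) u(1) G_model_refl[OF model u(1)] no_S have "(u, [b]) \<in> phi ''Q''"
      by blast
    with Q_imp_R u show ?thesis by blast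
  qed
  with Gamma u show False
    unfolding forces_Gamma_iff by blast
qed

theorem lemma3p1:
  fixes W :: "'w set" and le :: "'w \<Rightarrow> 'w \<Rightarrow> bool" and v0 :: 'w
    and D :: "'d set" and phi :: "string \<Rightarrow> ('w \<times> 'd list) set"
  assumes "G_model W le v0 D phi"
    and "v \<in> W"
    and "\<forall>n. e n \<in> D"
  shows "forces W le D phi v e (Imp Gamma Delta)"
  unfolding forces.simps(5) forces_Delta_iff
  using Gamma_forces_S[OF assms(1)] by blast

end
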